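(* In the parallel-links routing game with homogeneous costs described in the context, for every $l$ with $1\le l<L$: (i) $T_l(f^*_l)\le T_{l+1}(f^*_{l+1})$; (ii) $T_l(\hat f_l)\le T_{l+1}(\hat f_{l+1})$.
   Context: Parallel-links routing game: users $\mathcal N=\{1,\dots,N\}$ share parallel links $\mathcal L=\{1,\dots,L\}$ from a common source to a common destination; link $l$ has capacity $c_l$, links indexed so that $c_1\ge c_2\ge\dots\ge c_L$. User $i$ has demand $r^i>0$, $R=\sum_ir^i<\sum_lc_l$. A routing strategy of user $i$ is $\mathbf f^i=(f^i_l)_l$ with $f^i_l\ge0$, $\sum_lf^i_l=r^i$; feasible profiles form $\mathbf F$; $f_l=\sum_if^i_l$. Homogeneous costs: $J^i(\mathbf f)=\sum_lf^i_lT_l(f_l)$, each $T_l:[0,\infty)\to[0,\infty)$ strictly increasing, convex, continuously differentiable, with $T_l(f_l)=T(c_l-f_l)$ for $f_l<c_l$ and $T_l(f_l)=\infty$ for $f_l\ge c_l$, for a single link-independent function $T$ with $T(c_l-f_l)$ strictly increasing in $f_l$. $(\hat f_l)_l$ are the link totals of the unique Nash equilibrium (feasible profile where each user's strategy minimizes its own cost given the others'). $(f^*_l)_l$ are the link totals minimizing the social cost $\sum_lf_lT_l(f_l)$ over feasible profiles. *)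

theory Defs
  imports "HOL-Analysis.Analysis" "HOL-Library.Extended_Real"
begin

definition strategy :: "nat \<Rightarrow> real \<Rightarrow> (nat \<Rightarrow> real) \<Rightarrow> bool" where
  "strategy L ri g \<longleftrightarrow> (\<forall>l\<in>{1..L}. 0 \<le> g l) \<and> (\<Sum>l=1..L. g l) = ri"

definition feasible :: "nat \<Rightarrow> nat \<Rightarrow> (nat \<Rightarrow> real) \<Rightarrow> (nat \<Rightarrow> nat \<Rightarrow> real) \<Rightarrow> bool" where
  "feasible N L r f \<longleftrightarrow> (\<forall>i\<in>{1..N}. strategy L (r i) (f i))"

definition linkflow :: "nat \<Rightarrow> (nat \<Rightarrow> nat \<Rightarrow> real) \<Rightarrow> nat \<Rightarrow> real" where
  "linkflow N f l = (\<Sum>i=1..N. f i l)"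

definition linkcost :: "(real \<Rightarrow> real) \<Rightarrow> (nat \<Rightarrow> real) \<Rightarrow> nat \<Rightarrow> real \<Rightarrow> ereal" where
  "linkcost T c l x = (if x < c l then ereal (T (c l - x)) else \<infinity>)"

definition user_cost :: "nat \<Rightarrow> nat \<Rightarrow> (real \<Rightarrow> real) \<Rightarrow> (nat \<Rightarrow> real)
    \<Rightarrow> (nat \<Rightarrow> nat \<Rightarrow> real) \<Rightarrow> nat \<Rightarrow> ereal" where
  "user_cost N L T c f i = (\<Sum>l=1..L. ereal (f i l) * linkcost T c l (linkflow N f l))"

definition social_cost :: "nat \<Rightarrow> nat \<Rightarrow> (real \<Rightarrow> real) \<Rightarrow> (nat \<Rightarrow> real)
    \<Rightarrow> (nat \<Rightarrow> nat \<Rightarrow> real) \<Rightarrow> ereal" where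
  "social_cost N L T c f = (\<Sum>l=1..L. ereal (linkflow N f l) * linkcost T c l (linkflow N f l))"

definition nash_eq :: "nat \<Rightarrow> nat \<Rightarrow> (nat \<Rightarrow> real) \<Rightarrow> (real \<Rightarrow> real) \<Rightarrow> (nat \<Rightarrow> real)
    \<Rightarrow> (nat \<Rightarrow> nat \<Rightarrow> real) \<Rightarrow> bool" where
  "nash_eq N L r T c f \<longleftrightarrow> feasible N L r f \<and>
     (\<forall>i\<in>{1..N}. \<forall>g. strategy L (r i) g \<longrightarrow>
        user_cost N L T c f i \<le> user_cost N L T c (f(i := g)) i)"

definition social_opt :: "nat \<Rightarrow> nat \<Rightarrow> (nat \<Rightarrow> real) \<Rightarrow> (real \<Rightarrow> real) \<Rightarrow> (nat \<Rightarrow> real)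
    \<Rightarrow> (nat \<Rightarrow> nat \<Rightarrow> real) \<Rightarrow> bool" where
  "social_opt N L r T c f \<longleftrightarrow> feasible N L r f \<and>
     (\<forall>g. feasible N L r g \<longrightarrow> social_cost N L T c f \<le> social_cost N L T c g)"

end

theory Submission imports Defs begin

text \<open>
  Suppose link \<open>l\<close> were more expensive than link \<open>l + 1\<close>. As \<open>T\<close> is decreasing, link \<open>l\<close>
  then has the smaller residual capacity \<open>c\<^sub>l - f\<^sub>l\<close>, and since \<open>c\<^sub>l\<^sub>+\<^sub>1 \<le> c\<^sub>l\<close> it carries
  strictly more flow. Move a small amount \<open>s\<close> of flow from link \<open>l\<close> to link \<open>l + 1\<close>: for the
  social optimum the total flow, for the Nash equilibrium the flow of a user who sends more on
  \<open>l\<close> than on \<open>l + 1\<close>. With weights \<open>x \<ge> y \<ge> 0\<close> and residual capacities \<open>a + 2s < b\<close>, the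
  cost changes from \<open>x T(a) + y T(b)\<close> to \<open>(x - s) T(a + s) + (y + s) T(b - s)\<close>, which is
  strictly smaller by convexity and strict monotonicity of \<open>T\<close>. This contradicts optimality,
  resp. the equilibrium condition.
\<close>

lemma convex_decreasing_transfer_less:
  fixes T :: "real \<Rightarrow> real"
  assumes convex: "convex_on {0<..C} T"
    and decr: "\<forall>x y. 0 < x \<and> x < y \<and> y \<le> C \<longrightarrow> T y < T x"
    and a: "0 < a" and s: "0 < s" and ab: "a + s < b - s" and bC: "b \<le> C"
    and y: "0 \<le> y" "y \<le> x"
  shows "(x - s) * T (a + s) + (y + s) * T (b - s) < x * T a + y * T b"
proof -
  have "(T (a + s) - T a) / s = (T a - T (a + s)) / (a - (a + s))"
    using s by (simp add: field_simps)
  also have "\<dots> \<le> (T a - T b) / (a - b)"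
    by (rule convex_on_slope_le(1)[OF convex]) (use a s ab bC in auto)
  also have "\<dots> \<le> (T (b - s) - T b) / ((b - s) - b)"
    by (rule convex_on_slope_le(2)[OF convex]) (use a s ab bC in auto)
  also have "\<dots> = (T b - T (b - s)) / s"
    using s by (simp add: field_simps)
  finally have slopes: "T (a + s) - T a \<le> T b - T (b - s)"
    using s by (simp add: divide_le_cancel)
  have "T (a + s) \<le> T a" "T (b - s) < T (a + s)"
    using decr a s ab bC by (smt (verit))+
  then have "y * (T (a + s) - T a) \<le> y * (T b - T (b - s))"
    and "(x - y) * (T (a + s) - T a) \<le> 0"
    and "s * (T (b - s) - T (a + s)) < 0"
    using slopes y s by (simp_all add: mult_left_mono mult_nonneg_nonpos mult_pos_neg)
  then show ?thesis by (simp add: algebra_simps)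
qed

lemma sum_fun_upd:
  fixes h :: "'a \<Rightarrow> 'b::ab_group_add"
  assumes "finite A" "i \<in> A"
  shows "sum (h(i := x)) A = sum h A + (x - h i)"
proof -
  have "sum (h(i := x)) (A - {i}) = sum h (A - {i})"
    by (intro sum.cong) auto
  then show ?thesis
    using assms by (simp add: sum.remove[of A i] algebra_simps)
qed

lemma sum_fun_upd2:
  fixes h :: "'a \<Rightarrow> 'b::ab_group_add"
  assumes "finite A" "l \<in> A" "m \<in> A" "l \<noteq> m"
  shows "sum (h(l := x, m := y)) A = sum h A + (x - h l) + (y - h m)"
  using assms sum_fun_upd[of A m "h(l := x)" y] sum_fun_upd[of A l h x] by simp

lemma sum_less_sum_imp_less:
  fixes f g :: "'a \<Rightarrow> 'b::{ordered_comm_monoid_add, linorder}"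
  assumes "sum f A < sum g A"
  shows "\<exists>i\<in>A. f i < g i"
  using assms sum_mono[of A g f] by (meson leD not_le_imp_less)

definition move_next :: "nat \<Rightarrow> real \<Rightarrow> (nat \<Rightarrow> real) \<Rightarrow> nat \<Rightarrow> real" where
  "move_next l s h = h(l := h l - s, Suc l := h (Suc l) + s)"

lemma sum_move_next:
  assumes "l \<in> {1..L}" "Suc l \<in> {1..L}"
  shows "(\<Sum>k=1..L. move_next l s h k) = (\<Sum>k=1..L. h k)"
  using sum_fun_upd2[of "{1..L}" l "Suc l" h] assms unfolding move_next_def by simp

lemma strategy_move_next:
  assumes "strategy L ri h" "1 \<le> l" "l < L" "0 \<le> s" "s \<le> h l"
  shows "strategy L ri (move_next l s h)"
  using assms sum_move_next[of l L s h] unfolding strategy_def move_next_def by auto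

lemma linkflow_update:
  assumes "i \<in> {1..N}"
  shows "linkflow N (f(i := g)) k = linkflow N f k - f i k + g k"
proof -
  have "(\<Sum>j=1..N. (f(i := g)) j k) = (\<Sum>j=1..N. ((\<lambda>j. f j k)(i := g k)) j)"
    by (intro sum.cong) auto
  then show ?thesis
    using sum_fun_upd[of "{1..N}" i "\<lambda>j. f j k"] assms unfolding linkflow_def by simp
qed

lemma linkflow_move_next:
  assumes "i \<in> {1..N}"
  shows "linkflow N (f(i := move_next l s (f i))) = move_next l s (linkflow N f)"
  using linkflow_update[OF assms] by (auto simp: move_next_def)

lemma feasible_move_next:
  assumes "feasible N L r f" "i \<in> {1..N}" "1 \<le> l" "l < L" "0 \<le> s" "s \<le> f i l"
  shows "feasible N L r (f(i := move_next l s (f i)))"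
  using assms strategy_move_next[of L "r i" "f i" l s] unfolding feasible_def by auto

lemma linkflow_nonneg:
  "feasible N L r f \<Longrightarrow> k \<in> {1..L} \<Longrightarrow> 0 \<le> linkflow N f k"
  unfolding feasible_def strategy_def linkflow_def by (auto intro: sum_nonneg)

definition weighted_cost :: "nat \<Rightarrow> (real \<Rightarrow> real) \<Rightarrow> (nat \<Rightarrow> real)
    \<Rightarrow> (nat \<Rightarrow> real) \<Rightarrow> (nat \<Rightarrow> real) \<Rightarrow> ereal" where
  "weighted_cost L T c w F = (\<Sum>k=1..L. ereal (w k) * linkcost T c k (F k))"

lemma social_cost_eq_weighted_cost:
  "social_cost N L T c f = weighted_cost L T c (linkflow N f) (linkflow N f)"
  unfolding social_cost_def weighted_cost_def ..

lemma user_cost_eq_weighted_cost: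
  "user_cost N L T c f i = weighted_cost L T c (f i) (linkflow N f)"
  unfolding user_cost_def weighted_cost_def ..

lemma weighted_cost_finite_iff:
  "weighted_cost L T c w F < \<infinity> \<longleftrightarrow> (\<forall>k\<in>{1..L}. 0 < w k \<longrightarrow> F k < c k)"
proof -
  have "ereal (w k) * linkcost T c k (F k) = \<infinity> \<longleftrightarrow> 0 < w k \<and> c k \<le> F k" for k
    unfolding linkcost_def by auto
  then have "weighted_cost L T c w F = \<infinity> \<longleftrightarrow> (\<exists>k\<in>{1..L}. 0 < w k \<and> c k \<le> F k)"
    unfolding weighted_cost_def by (subst sum_Pinfty) auto
  then show ?thesis by (auto simp: less_top[symmetric] not_less)
qed

lemma weighted_cost_below_cap:
  assumes "\<forall>k\<in>{1..L}. F k < c k"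
  shows "weighted_cost L T c w F = ereal (\<Sum>k=1..L. w k * T (c k - F k))"
  using assms unfolding weighted_cost_def linkcost_def by simp

lemma strategy_proportional:
  assumes "0 \<le> ri" "\<forall>k\<in>{1..L}. 0 \<le> s k" "0 < (\<Sum>k=1..L. s k)"
  shows "strategy L ri (\<lambda>k. ri * s k / (\<Sum>k=1..L. s k))"
  using assms unfolding strategy_def
  by (simp add: sum_divide_distrib[symmetric] sum_distrib_left[symmetric])

lemma sum_linkflow:
  assumes "feasible N L r f"
  shows "(\<Sum>k=1..L. linkflow N f k) = (\<Sum>i=1..N. r i)"
proof -
  have "(\<Sum>k=1..L. linkflow N f k) = (\<Sum>i=1..N. \<Sum>k=1..L. f i k)"
    unfolding linkflow_def by (rule sum.swap)
  also have "\<dots> = (\<Sum>i=1..N. r i)"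
    using assms unfolding feasible_def strategy_def by (intro sum.cong) auto
  finally show ?thesis .
qed

locale routing_game =
  fixes N L :: nat and r c :: "nat \<Rightarrow> real" and T :: "real \<Rightarrow> real"
  assumes cap_pos: "\<forall>k\<in>{1..L}. 0 < c k"
    and cap_sorted: "\<forall>k. 1 \<le> k \<and> k < L \<longrightarrow> c (k + 1) \<le> c k"
    and dem_pos: "\<forall>i\<in>{1..N}. 0 < r i"
    and dem_cap: "(\<Sum>i=1..N. r i) < (\<Sum>k=1..L. c k)"
    and T_strict_decr: "\<forall>x y. 0 < x \<and> x < y \<and> y \<le> c 1 \<longrightarrow> T y < T x"
    and T_convex: "convex_on {0<..c 1} T"
begin

lemma cap_le_first: "k \<in> {1..L} \<Longrightarrow> c k \<le> c 1"
proof (induction k)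
  case (Suc k)
  then show ?case using cap_sorted by (cases "k = 0") (auto intro: order.trans[of _ "c k"])
qed simp

lemma move_next_lowers_weighted_cost:
  assumes l: "1 \<le> l" "l < L"
    and below_cap: "\<forall>k\<in>{1..L}. F k < c k"
    and F_nonneg: "0 \<le> F (Suc l)"
    and res: "c l - F l < c (Suc l) - F (Suc l)"
    and w: "0 \<le> w (Suc l)" "w (Suc l) \<le> w l"
    and d: "0 < d"
  shows "\<exists>s. 0 < s \<and> s \<le> d \<and>
    weighted_cost L T c (move_next l s w) (move_next l s F) < weighted_cost L T c w F"
proof -
  define a where "a = c l - F l"
  define b where "b = c (Suc l) - F (Suc l)"
  have "0 < (b - a) / 2" using res unfolding a_def b_def by simp
  then obtain s where s: "0 < s" "s < d" "s < (b - a) / 2"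
    using field_lbound_gt_zero d by blast
  then have s_gap: "a + 2 * s < b"
    by (simp add: field_simps)
  define cost where "cost k = w k * T (c k - F k)" for k
  have lS: "l \<in> {1..L}" "Suc l \<in> {1..L}" using l by auto
  have "0 < a" using below_cap lS unfolding a_def by auto
  moreover have "b \<le> c 1" using cap_le_first[OF lS(2)] F_nonneg unfolding b_def by simp
  ultimately have less: "(w l - s) * T (a + s) + (w (Suc l) + s) * T (b - s) < cost l + cost (Suc l)"
    using convex_decreasing_transfer_less[OF T_convex T_strict_decr] s s_gap w
    unfolding cost_def by (simp add: a_def b_def)
  have moved_below_cap: "\<forall>k\<in>{1..L}. move_next l s F k < c k"
    using below_cap s s_gap bspec[OF below_cap lS(1)] unfolding move_next_def a_def b_def by auto
  have "weighted_cost L T c (move_next l s w) (move_next l s F)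
      = ereal (\<Sum>k=1..L. (cost(l := (w l - s) * T (a + s), Suc l := (w (Suc l) + s) * T (b - s))) k)"
    unfolding weighted_cost_below_cap[OF moved_below_cap] a_def b_def cost_def
    by (intro arg_cong[where f = ereal] sum.cong) (auto simp: move_next_def algebra_simps)
  also have "\<dots> < ereal (\<Sum>k=1..L. cost k)"
    using sum_fun_upd2[of "{1..L}" l "Suc l" cost] lS less by simp
  also have "\<dots> = weighted_cost L T c w F"
    unfolding weighted_cost_below_cap[OF below_cap] cost_def ..
  finally show ?thesis using s by (auto intro: exI[of _ s])
qed

lemma social_opt_cost_finite:
  assumes opt: "social_opt N L r T c f"
  shows "social_cost N L T c f < \<infinity>"
proof -
  define C where "C = (\<Sum>k=1..L. c k)"
  define R where "R = (\<Sum>i=1..N. r i)"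
  have "0 \<le> R" using dem_pos unfolding R_def by (auto intro: sum_nonneg less_imp_le)
  then have RC: "R < C" "0 < C" using dem_cap unfolding R_def C_def by auto
  define g where "g i k = r i * c k / C" for i k
  have "feasible N L r g"
    using strategy_proportional[of _ L c] dem_pos cap_pos RC
    unfolding feasible_def g_def C_def by (simp add: less_imp_le)
  moreover have "linkflow N g k < c k" if "k \<in> {1..L}" for k
  proof -
    have "linkflow N g k = R * c k / C"
      unfolding linkflow_def g_def R_def by (simp add: sum_divide_distrib[symmetric] sum_distrib_right)
    also have "\<dots> < c k" using RC cap_pos that by (simp add: divide_less_eq)
    finally show ?thesis .
  qed
  then have "social_cost N L T c g < \<infinity>"
    unfolding social_cost_eq_weighted_cost weighted_cost_finite_iff by blast
  ultimately show ?thesis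
    using opt unfolding social_opt_def by (meson order.strict_trans1)
qed

text \<open>User \<open>i\<close> can always split its demand in proportion to the capacity left over by
  the other users; the demand condition makes this leftover exceed \<open>r\<^sub>i\<close>.\<close>

lemma nash_eq_user_cost_finite:
  assumes ne: "nash_eq N L r T c f" and i: "i \<in> {1..N}"
  shows "user_cost N L T c f i < \<infinity>"
proof -
  have feas: "feasible N L r f" using ne unfolding nash_eq_def by blast
  define others where "others k = linkflow N f k - f i k" for k
  define spare where "spare k = max 0 (c k - others k)" for k
  define S where "S = (\<Sum>k=1..L. spare k)"
  have "(\<Sum>k=1..L. others k) = (\<Sum>j=1..N. r j) - r i"
    using sum_linkflow[OF feas] feas i
    unfolding others_def feasible_def strategy_def by (simp add: sum_subtractf)
  moreover have "(\<Sum>k=1..L. c k - others k) \<le> S"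
    unfolding S_def spare_def by (intro sum_mono) auto
  ultimately have "r i < S" using dem_cap by (simp add: sum_subtractf)
  moreover have ri: "0 < r i" using dem_pos i by blast
  ultimately have S: "r i < S" "0 < S" by auto
  define g where "g k = r i * spare k / S" for k
  have "strategy L (r i) g"
    using strategy_proportional[of "r i" L spare] ri S unfolding g_def S_def spare_def by simp
  moreover have "others k + g k < c k" if "0 < g k" for k
  proof -
    have "0 < spare k" using that ri S unfolding g_def by (simp add: zero_less_divide_iff zero_less_mult_iff)
    moreover have "g k < spare k"
      using S calculation unfolding g_def by (simp add: divide_less_eq mult.commute)
    ultimately show ?thesis unfolding spare_def by simp
  qed
  then have "user_cost N L T c (f(i := g)) i < \<infinity>"
    unfolding user_cost_eq_weighted_cost weighted_cost_finite_iff
    using linkflow_update[OF i] by (simp add: others_def)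
  ultimately show ?thesis
    using ne i unfolding nash_eq_def by (meson order.strict_trans1)
qed

lemma residual_gap:
  assumes l: "1 \<le> l" "l < L" and below_cap: "\<forall>k\<in>{1..L}. F k < c k" and "0 \<le> F l"
    and gap: "linkcost T c (Suc l) (F (Suc l)) < linkcost T c l (F l)"
  shows "c l - F l < c (Suc l) - F (Suc l)" and "F (Suc l) < F l"
proof -
  have lS: "l \<in> {1..L}" "Suc l \<in> {1..L}" using l by auto
  show res: "c l - F l < c (Suc l) - F (Suc l)"
  proof (rule ccontr)
    assume "\<not> ?thesis"
    moreover have "c l - F l \<le> c 1" using cap_le_first[OF lS(1)] \<open>0 \<le> F l\<close> by simp
    moreover have "0 < c (Suc l) - F (Suc l)" using below_cap lS by simp
    ultimately have "T (c l - F l) \<le> T (c (Suc l) - F (Suc l))"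
      using T_strict_decr by (cases "c l - F l = c (Suc l) - F (Suc l)") (auto simp: less_imp_le)
    then show False using gap below_cap lS unfolding linkcost_def by simp
  qed
  then show "F (Suc l) < F l" using cap_sorted l by fastforce
qed

lemma social_opt_below_cap:
  assumes opt: "social_opt N L r T c f" and k: "k \<in> {1..L}"
  shows "linkflow N f k < c k"
proof -
  have "0 \<le> linkflow N f k"
    using opt k linkflow_nonneg unfolding social_opt_def by blast
  then show ?thesis
    using social_opt_cost_finite[OF opt] cap_pos k
    unfolding social_cost_eq_weighted_cost weighted_cost_finite_iff by force
qed

lemma nash_eq_below_cap:
  assumes ne: "nash_eq N L r T c f" and k: "k \<in> {1..L}"
  shows "linkflow N f k < c k"
proof (rule ccontr)
  assume saturated: "\<not> ?thesis"
  then have "(\<Sum>j=1..N. 0) < (\<Sum>j=1..N. f j k)"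
    using cap_pos k unfolding linkflow_def by fastforce
  then obtain j where "j \<in> {1..N}" "0 < f j k"
    using sum_less_sum_imp_less by blast
  then show False
    using nash_eq_user_cost_finite[OF ne] saturated k
    unfolding user_cost_eq_weighted_cost weighted_cost_finite_iff by blast
qed

lemma social_opt_link_cost_mono:
  assumes opt: "social_opt N L r T c f" and l: "1 \<le> l" "l < L"
  shows "linkcost T c l (linkflow N f l) \<le> linkcost T c (Suc l) (linkflow N f (Suc l))"
proof (rule ccontr)
  define F where "F = linkflow N f"
  assume "\<not> ?thesis"
  then have gap: "linkcost T c (Suc l) (F (Suc l)) < linkcost T c l (F l)" unfolding F_def by simp
  have feas: "feasible N L r f" using opt unfolding social_opt_def by blast
  have F_nonneg: "\<forall>k\<in>{1..L}. 0 \<le> F k" using linkflow_nonneg[OF feas] unfolding F_def by blast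
  have below_cap: "\<forall>k\<in>{1..L}. F k < c k" using social_opt_below_cap[OF opt] unfolding F_def by blast
  have lS: "l \<in> {1..L}" "Suc l \<in> {1..L}" using l by auto
  note res = residual_gap[OF l below_cap bspec[OF F_nonneg lS(1)] gap]
  then have "(\<Sum>i=1..N. 0) < (\<Sum>i=1..N. f i l)"
    using F_nonneg lS unfolding F_def linkflow_def by fastforce
  then obtain i where i: "i \<in> {1..N}" "0 < f i l"
    using sum_less_sum_imp_less by blast
  then obtain s where s: "0 < s" "s \<le> f i l"
    and lower: "weighted_cost L T c (move_next l s F) (move_next l s F) < weighted_cost L T c F F"
    using move_next_lowers_weighted_cost[where w = F and d = "f i l", OF l below_cap
        bspec[OF F_nonneg lS(2)] res(1) bspec[OF F_nonneg lS(2)] less_imp_le[OF res(2)] i(2)]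
    by blast
  define g where "g = f(i := move_next l s (f i))"
  have "feasible N L r g" using feasible_move_next[OF feas i(1) l] s unfolding g_def by simp
  moreover have "social_cost N L T c g < social_cost N L T c f"
    using lower unfolding social_cost_eq_weighted_cost g_def linkflow_move_next[OF i(1)] F_def .
  ultimately show False using opt unfolding social_opt_def by (meson leD)
qed

lemma nash_eq_link_cost_mono:
  assumes ne: "nash_eq N L r T c f" and l: "1 \<le> l" "l < L"
  shows "linkcost T c l (linkflow N f l) \<le> linkcost T c (Suc l) (linkflow N f (Suc l))"
proof (rule ccontr)
  define F where "F = linkflow N f"
  assume "\<not> ?thesis"
  then have gap: "linkcost T c (Suc l) (F (Suc l)) < linkcost T c l (F l)" unfolding F_def by simp
  have feas: "feasible N L r f" using ne unfolding nash_eq_def by blast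
  have F_nonneg: "\<forall>k\<in>{1..L}. 0 \<le> F k" using linkflow_nonneg[OF feas] unfolding F_def by blast
  have below_cap: "\<forall>k\<in>{1..L}. F k < c k" using nash_eq_below_cap[OF ne] unfolding F_def by blast
  have lS: "l \<in> {1..L}" "Suc l \<in> {1..L}" using l by auto
  note res = residual_gap[OF l below_cap bspec[OF F_nonneg lS(1)] gap]
  then obtain i where i: "i \<in> {1..N}" "f i (Suc l) < f i l"
    using sum_less_sum_imp_less[of "\<lambda>i. f i (Suc l)"] unfolding F_def linkflow_def by blast
  have fi_nonneg: "0 \<le> f i (Suc l)"
    using feas i(1) lS unfolding feasible_def strategy_def by blast
  then obtain s where s: "0 < s" "s \<le> f i l"
    and lower: "weighted_cost L T c (move_next l s (f i)) (move_next l s F) < weighted_cost L T c (f i) F"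
    using move_next_lowers_weighted_cost[where w = "f i" and d = "f i l", OF l below_cap
        bspec[OF F_nonneg lS(2)] res(1) fi_nonneg less_imp_le[OF i(2)] le_less_trans[OF fi_nonneg i(2)]]
    by blast
  define h where "h = move_next l s (f i)"
  have "strategy L (r i) h"
    using strategy_move_next feas i(1) l s unfolding h_def feasible_def by (meson less_imp_le)
  moreover have "user_cost N L T c (f(i := h)) i < user_cost N L T c f i"
    using lower unfolding user_cost_eq_weighted_cost h_def linkflow_move_next[OF i(1)] F_def by simp
  ultimately show False using ne i(1) unfolding nash_eq_def by (meson leD)
qed

end

theorem lemma2p2:
  fixes N L :: nat and r c :: "nat \<Rightarrow> real" and T T' :: "real \<Rightarrow> real"
    and fstar fhat :: "nat \<Rightarrow> nat \<Rightarrow> real" and l :: nat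
  assumes N_pos: "N \<ge> 1"
    and cap_pos: "\<forall>k\<in>{1..L}. 0 < c k"
    and cap_sorted: "\<forall>k. 1 \<le> k \<and> k < L \<longrightarrow> c (k + 1) \<le> c k"
    and dem_pos: "\<forall>i\<in>{1..N}. 0 < r i"
    and dem_cap: "(\<Sum>i=1..N. r i) < (\<Sum>k=1..L. c k)"
    and T_nonneg: "\<forall>x\<in>{0<..c 1}. 0 \<le> T x"
    and T_strict_decr: "\<forall>x y. 0 < x \<and> x < y \<and> y \<le> c 1 \<longrightarrow> T y < T x"
    and T_convex: "convex_on {0<..c 1} T"
    and T_deriv: "\<forall>x\<in>{0<..c 1}. (T has_real_derivative T' x) (at x within {0<..c 1})"
    and T'_cont: "continuous_on {0<..c 1} T'"
    and opt: "social_opt N L r T c fstar"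
    and ne: "nash_eq N L r T c fhat"
    and l: "1 \<le> l" "l < L"
  shows "linkcost T c l (linkflow N fstar l) \<le> linkcost T c (l + 1) (linkflow N fstar (l + 1))
       \<and> linkcost T c l (linkflow N fhat l) \<le> linkcost T c (l + 1) (linkflow N fhat (l + 1))"
proof -
  interpret routing_game N L r c T
    using cap_pos cap_sorted dem_pos dem_cap T_strict_decr T_convex by unfold_locales
  show ?thesis
    using social_opt_link_cost_mono[OF opt l] nash_eq_link_cost_mono[OF ne l] by simp
qed

end
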